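(* Let ${\bf i}=(i_1,\dots,i_N)$ be a reduced word for $w_0$. Then ${\mathcal H}_{\bf i}=\Big\{\big(\sum_{i\in I}m_{1,i}h_i,\ \sum_{i\in I}m_{2,i}h_i,\ \dots,\ \sum_{i\in I}m_{N,i}h_i\big)\ \Big|\ (h_1,\dots,h_n)\in\mathbb Z^n\Big\}$.
   Context: $A=(a_{ij})_{i,j\in I}$ is the Cartan matrix of a simple Lie algebra ($a_{ij}=\alpha_j(h_i)$), $I=\{1,\dots,n\}$, $w_0$ the longest Weyl group element of length $N$. For $k\in[1,N]$ let $k^{(+)}:=\min\{l>k\mid i_l=i_k\}$ when it exists. Define linear forms on $\mathbb Z^N$: $\beta_k(x)=x_k+\sum_{k<j<k^{(+)}}a_{i_k,i_j}x_j+x_{k^{(+)}}$, and ${\mathcal H}_{\bf i}:=\{x\in\mathbb Z^N\mid\beta_k(x)=0$ for all $k$ such that $k^{(+)}$ exists (i.e. $k^{(+)}\le N$)$\}$. Let $Q'=\bigoplus_{i\in I}\mathbb Z\alpha'_i$ with reflections $s_i(\alpha'_j)=\alpha'_j-a_{ji}\alpha'_i$ (the root lattice and Weyl group action of the Langlands dual algebra). Set $\alpha^{(k)}:=s_{i_N}s_{i_{N-1}}\cdots s_{i_{k+1}}(\alpha'_{i_k})$ and write $\alpha^{(k)}=\sum_{i\in I}m_{k,i}\alpha'_i$ with $m_{k,i}\in\mathbb Z_{\ge0}$ (these $\alpha^{(k)}$ are exactly the positive roots). *)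

theory Defs
  imports Complex_Main
begin

text \<open>Index set I = {1..n}; Cartan matrix A :: nat => nat => int with a_ij = A i j.\<close>

definition is_simple_cartan :: "nat \<Rightarrow> (nat \<Rightarrow> nat \<Rightarrow> int) \<Rightarrow> bool" where
  "is_simple_cartan n A \<longleftrightarrow>
     n \<ge> 1 \<and>
     (\<forall>i\<in>{1..n}. A i i = 2) \<and>
     (\<forall>i\<in>{1..n}. \<forall>j\<in>{1..n}. i \<noteq> j \<longrightarrow> A i j \<le> 0) \<and>
     (\<forall>i\<in>{1..n}. \<forall>j\<in>{1..n}. A i j = 0 \<longleftrightarrow> A j i = 0) \<and>
     (\<not> (\<exists>J K. J \<noteq> {} \<and> K \<noteq> {} \<and> J \<inter> K = {} \<and> J \<union> K = {1..n} \<and>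
              (\<forall>j\<in>J. \<forall>k\<in>K. A j k = 0))) \<and>
     (\<exists>d :: nat \<Rightarrow> int. (\<forall>i\<in>{1..n}. d i > 0) \<and>
        (\<forall>i\<in>{1..n}. \<forall>j\<in>{1..n}. d i * A i j = d j * A j i) \<and>
        (\<forall>x :: nat \<Rightarrow> real. (\<exists>i\<in>{1..n}. x i \<noteq> 0) \<longrightarrow>
            (\<Sum>i\<in>{1..n}. \<Sum>j\<in>{1..n}. real_of_int (d i * A i j) * x i * x j) > 0))"

text \<open>Simple reflection s_i on Q' in coordinates w.r.t. alpha'_1..alpha'_n:
  s_i(alpha'_j) = alpha'_j - a_ji alpha'_i.\<close>
definition refl :: "nat \<Rightarrow> (nat \<Rightarrow> nat \<Rightarrow> int) \<Rightarrow> nat \<Rightarrow> (nat \<Rightarrow> int) \<Rightarrow> (nat \<Rightarrow> int)" where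
  "refl n A i x = (\<lambda>k. if k = i then x k - (\<Sum>j\<in>{1..n}. A j i * x j) else x k)"

definition word_act :: "nat \<Rightarrow> (nat \<Rightarrow> nat \<Rightarrow> int) \<Rightarrow> nat list \<Rightarrow> (nat \<Rightarrow> int) \<Rightarrow> (nat \<Rightarrow> int)" where
  "word_act n A ws = foldr (refl n A) ws"

definition reduced_word :: "nat \<Rightarrow> (nat \<Rightarrow> nat \<Rightarrow> int) \<Rightarrow> nat list \<Rightarrow> bool" where
  "reduced_word n A ws \<longleftrightarrow> set ws \<subseteq> {1..n} \<and>
     (\<forall>vs. set vs \<subseteq> {1..n} \<longrightarrow> word_act n A vs = word_act n A ws \<longrightarrow> length ws \<le> length vs)"

text \<open>Reduced word of the longest element w0: a reduced word of maximal length.\<close>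
definition reduced_word_w0 :: "nat \<Rightarrow> (nat \<Rightarrow> nat \<Rightarrow> int) \<Rightarrow> nat list \<Rightarrow> bool" where
  "reduced_word_w0 n A ws \<longleftrightarrow> reduced_word n A ws \<and>
     (\<forall>vs. reduced_word n A vs \<longrightarrow> length vs \<le> length ws)"

text \<open>Positions are 1-based: i_k = ws ! (k-1), k in {1..N}.\<close>
definition wi :: "nat list \<Rightarrow> nat \<Rightarrow> nat" where
  "wi ws k = ws ! (k - 1)"

definition has_plus :: "nat list \<Rightarrow> nat \<Rightarrow> bool" where
  "has_plus ws k \<longleftrightarrow> (\<exists>l. k < l \<and> l \<le> length ws \<and> wi ws l = wi ws k)"

definition kplus :: "nat list \<Rightarrow> nat \<Rightarrow> nat" where
  "kplus ws k = (LEAST l. k < l \<and> l \<le> length ws \<and> wi ws l = wi ws k)"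

definition beta :: "(nat \<Rightarrow> nat \<Rightarrow> int) \<Rightarrow> nat list \<Rightarrow> nat \<Rightarrow> (nat \<Rightarrow> int) \<Rightarrow> int" where
  "beta A ws k x = x k + (\<Sum>j\<in>{k<..<kplus ws k}. A (wi ws k) (wi ws j) * x j) + x (kplus ws k)"

text \<open>Z^N as functions nat => int supported on {1..N}.\<close>
definition H_i :: "(nat \<Rightarrow> nat \<Rightarrow> int) \<Rightarrow> nat list \<Rightarrow> (nat \<Rightarrow> int) set" where
  "H_i A ws = {x. (\<forall>k. k \<notin> {1..length ws} \<longrightarrow> x k = 0) \<and>
       (\<forall>k\<in>{1..length ws}. has_plus ws k \<longrightarrow> beta A ws k x = 0)}"

text \<open>alpha^(k) = s_{i_N} ... s_{i_{k+1}} (alpha'_{i_k}); m k i its i-th coordinate.\<close>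
definition mcoef :: "nat \<Rightarrow> (nat \<Rightarrow> nat \<Rightarrow> int) \<Rightarrow> nat list \<Rightarrow> nat \<Rightarrow> nat \<Rightarrow> int" where
  "mcoef n A ws k i = word_act n A (rev (drop k ws)) (\<lambda>l. if l = wi ws k then 1 else 0) i"

end

theory Submission
  imports Defs
begin

text \<open>Each equation \<open>beta_k(x) = 0\<close> expresses \<open>x_k\<close> through the coordinates at positions
  \<open>k < j \<le> k\<^sup>+\<close>, so an element of \<open>H_i\<close> is determined by its values at the last occurrences
  of the letters of the word. The vectors \<open>k \<mapsto> \<langle>\<alpha>^(k), h\<rangle>\<close> satisfy all these equations
  because of the root string relation \<open>\<alpha>^(k) + \<Sum>_{k<j<k\<^sup>+} a_{i_k,i_j} \<alpha>^(j) + \<alpha>^(k\<^sup>+) = 0\<close>,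
  obtained by moving \<open>\<alpha>'_{i_k}\<close> through the reflections \<open>s_{i_{k+1}}, \<dots>, s_{i_{k\<^sup>+}}\<close> one at a
  time. Conversely, at the last occurrence \<open>k\<close> of a letter \<open>c\<close> the root \<open>\<alpha>^(k)\<close> has
  \<open>c\<close>-coordinate 1 while all later roots have \<open>c\<close>-coordinate 0; this triangularity lets one
  choose \<open>h\<close> attaining any prescribed values at the last occurrences.\<close>

definition unit_vec :: "nat \<Rightarrow> nat \<Rightarrow> int" where
  "unit_vec c = (\<lambda>l. if l = c then 1 else 0)"

lemma mcoef_eq_word_act_unit_vec:
  "mcoef n A ws k = word_act n A (rev (drop k ws)) (unit_vec (wi ws k))"
  by (simp add: mcoef_def unit_vec_def fun_eq_iff)

lemma refl_diff_scaled:
  "refl n A i (\<lambda>d. x d - a * y d) = (\<lambda>d. refl n A i x d - a * refl n A i y d)"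
proof -
  have "(\<Sum>j\<in>{1..n}. A j i * (x j - a * y j)) =
        (\<Sum>j\<in>{1..n}. A j i * x j) - a * (\<Sum>j\<in>{1..n}. A j i * y j)"
    by (simp add: sum_subtractf sum_distrib_left algebra_simps)
  then show ?thesis unfolding refl_def by (auto simp: algebra_simps)
qed

lemma word_act_diff_scaled:
  "word_act n A ws (\<lambda>d. x d - a * y d) = (\<lambda>d. word_act n A ws x d - a * word_act n A ws y d)"
  by (induction ws) (simp_all add: word_act_def refl_diff_scaled)

lemma word_act_notin: "d \<notin> set ws \<Longrightarrow> word_act n A ws x d = x d"
  by (induction ws) (auto simp: word_act_def refl_def)

lemma refl_unit_vec:
  assumes "i \<in> {1..n}"
  shows "refl n A c (unit_vec i) = (\<lambda>d. unit_vec i d - A i c * unit_vec c d)"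
proof -
  have "(\<Sum>j\<in>{1..n}. A j c * unit_vec i j) = A i c"
    using assms by (simp add: unit_vec_def if_distrib sum.delta cong: if_cong)
  then show ?thesis unfolding refl_def by (auto simp: unit_vec_def)
qed

lemma word_act_suffix_Suc:
  assumes "m < length ws"
  shows "word_act n A (rev (drop m ws)) x = word_act n A (rev (drop (Suc m) ws)) (refl n A (wi ws (Suc m)) x)"
proof -
  have "drop m ws = ws ! m # drop (Suc m) ws"
    using assms by (rule Cons_nth_drop_Suc[symmetric])
  then show ?thesis by (simp add: word_act_def wi_def)
qed

lemma kplus_props:
  assumes "has_plus ws k"
  shows "k < kplus ws k" "kplus ws k \<le> length ws" "wi ws (kplus ws k) = wi ws k"
  using LeastI_ex[OF assms[unfolded has_plus_def]] by (simp_all add: kplus_def)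

lemma wi_neq_before_kplus:
  assumes "has_plus ws k" "k < j" "j < kplus ws k"
  shows "wi ws j \<noteq> wi ws k"
proof
  assume "wi ws j = wi ws k"
  moreover have "j \<le> length ws"
    using kplus_props(2)[OF assms(1)] assms(3) by simp
  ultimately have "kplus ws k \<le> j"
    unfolding kplus_def using assms(2) by (simp add: Least_le)
  with assms(3) show False by simp
qed

lemma wi_in_alphabet:
  assumes "set ws \<subseteq> {1..n}" "1 \<le> k" "k \<le> length ws"
  shows "wi ws k \<in> {1..n}"
proof -
  have "k - 1 < length ws"
    using assms(2,3) by simp
  then show ?thesis
    using assms(1) unfolding wi_def by (meson nth_mem subsetD)
qed

lemma last_occurrence_notin_suffix:
  assumes "1 \<le> k" "\<not> has_plus ws k"
  shows "wi ws k \<notin> set (drop k ws)"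
proof
  assume "wi ws k \<in> set (drop k ws)"
  then obtain q where "q < length ws - k" "ws ! (k + q) = wi ws k"
    by (auto simp: in_set_conv_nth)
  then have "has_plus ws k"
    using assms(1) unfolding has_plus_def wi_def by (intro exI[of _ "Suc (k + q)"]) auto
  with assms(2) show False by contradiction
qed

lemma mcoef_off_suffix:
  "c \<notin> set (drop k ws) \<Longrightarrow> mcoef n A ws k c = unit_vec (wi ws k) c"
  by (simp add: mcoef_eq_word_act_unit_vec word_act_notin)

lemma word_act_suffix_unit_vec_expand:
  assumes i: "wi ws k \<in> {1..n}" and km: "k \<le> m" "m \<le> length ws"
    and distinct: "\<forall>j\<in>{k<..m}. wi ws j \<noteq> wi ws k"
  shows "word_act n A (rev (drop m ws)) (unit_vec (wi ws k)) d =
    mcoef n A ws k d + (\<Sum>j\<in>{k<..m}. A (wi ws k) (wi ws j) * mcoef n A ws j d)"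
  using km distinct
proof (induction m rule: dec_induct)
  case base
  then show ?case by (simp add: mcoef_eq_word_act_unit_vec)
next
  case (step m)
  let ?i = "wi ws k" and ?c = "wi ws (Suc m)" and ?T = "\<lambda>m. word_act n A (rev (drop m ws))"
  have "?T m (unit_vec ?i) d = ?T (Suc m) (unit_vec ?i) d - A ?i ?c * mcoef n A ws (Suc m) d"
    using step.prems(1) by (simp add: word_act_suffix_Suc refl_unit_vec[OF i]
        word_act_diff_scaled mcoef_eq_word_act_unit_vec)
  moreover have "{k<..Suc m} = insert (Suc m) {k<..m}"
    using step.hyps by auto
  ultimately show ?case
    using step by simp
qed

lemma root_string_relation:
  assumes ws: "set ws \<subseteq> {1..n}" and diag: "\<forall>i\<in>{1..n}. A i i = 2"
    and k: "1 \<le> k" "k \<le> length ws" and hp: "has_plus ws k"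
  shows "mcoef n A ws k d + (\<Sum>j\<in>{k<..<kplus ws k}. A (wi ws k) (wi ws j) * mcoef n A ws j d)
          + mcoef n A ws (kplus ws k) d = 0"
proof -
  define i p where "i = wi ws k" and "p = kplus ws k"
  have p: "k < p" "p \<le> length ws" "wi ws p = i"
    using kplus_props[OF hp] by (simp_all add: i_def p_def)
  have i_in: "i \<in> {1..n}"
    using wi_in_alphabet[OF ws k] by (simp add: i_def)
  have "\<forall>j\<in>{k<..p - 1}. wi ws j \<noteq> wi ws k"
    using wi_neq_before_kplus[OF hp] by (auto simp: p_def)
  then have "word_act n A (rev (drop (p - 1) ws)) (unit_vec i) d =
      mcoef n A ws k d + (\<Sum>j\<in>{k<..p - 1}. A i (wi ws j) * mcoef n A ws j d)"
    using word_act_suffix_unit_vec_expand[of ws k n "p - 1"] i_in p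
    by (simp add: i_def)
  moreover have "word_act n A (rev (drop (p - 1) ws)) (unit_vec i) =
      word_act n A (rev (drop p ws)) (\<lambda>d. unit_vec i d - A i i * unit_vec i d)"
    using word_act_suffix_Suc[of "p - 1" ws n A] p by (simp add: refl_unit_vec[OF i_in])
  then have "word_act n A (rev (drop (p - 1) ws)) (unit_vec i) d = - mcoef n A ws p d"
    unfolding word_act_diff_scaled
    using p by (simp add: diag[rule_format, OF i_in] mcoef_eq_word_act_unit_vec)
  moreover have "{k<..p - 1} = {k<..<p}"
    using p by auto
  ultimately show ?thesis
    by (simp add: i_def p_def)
qed

definition root_pairing :: "nat \<Rightarrow> (nat \<Rightarrow> nat \<Rightarrow> int) \<Rightarrow> nat list \<Rightarrow> (nat \<Rightarrow> int) \<Rightarrow> nat \<Rightarrow> int" where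
  "root_pairing n A ws h =
     (\<lambda>k. if k \<in> {1..length ws} then (\<Sum>i\<in>{1..n}. mcoef n A ws k i * h i) else 0)"

lemma root_pairing_in_H_i:
  assumes ws: "set ws \<subseteq> {1..n}" and diag: "\<forall>i\<in>{1..n}. A i i = 2"
  shows "root_pairing n A ws h \<in> H_i A ws"
  unfolding H_i_def
proof (intro CollectI conjI allI impI ballI)
  fix k assume "k \<notin> {1..length ws}"
  then show "root_pairing n A ws h k = 0"
    unfolding root_pairing_def by (simp only: if_False)
next
  fix k assume k: "k \<in> {1..length ws}" and hp: "has_plus ws k"
  define p where "p = kplus ws k"
  have p: "k < p" "p \<le> length ws"
    using kplus_props[OF hp] by (simp_all add: p_def)
  let ?m = "mcoef n A ws" and ?a = "\<lambda>j. A (wi ws k) (wi ws j)"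
  have pairing: "root_pairing n A ws h j = (\<Sum>i\<in>{1..n}. ?m j i * h i)" if "k \<le> j" "j \<le> p" for j
    using that k p by (simp add: root_pairing_def)
  have "(\<Sum>j\<in>{k<..<p}. ?a j * root_pairing n A ws h j) =
        (\<Sum>j\<in>{k<..<p}. ?a j * (\<Sum>i\<in>{1..n}. ?m j i * h i))"
    by (intro sum.cong) (auto simp: pairing)
  then have "beta A ws k (root_pairing n A ws h) = (\<Sum>i\<in>{1..n}. ?m k i * h i)
     + (\<Sum>j\<in>{k<..<p}. ?a j * (\<Sum>i\<in>{1..n}. ?m j i * h i)) + (\<Sum>i\<in>{1..n}. ?m p i * h i)"
    unfolding beta_def p_def[symmetric] using p by (simp add: pairing)
  also have "\<dots> = (\<Sum>i\<in>{1..n}. (?m k i + (\<Sum>j\<in>{k<..<p}. ?a j * ?m j i) + ?m p i) * h i)"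
    by (simp add: sum_distrib_left sum_distrib_right sum.distrib algebra_simps sum.swap[of _ "{k<..<p}"])
  also have "\<dots> = 0"
    using root_string_relation[of ws n A, OF ws diag, of k] k hp by (simp add: p_def)
  finally show "beta A ws k (root_pairing n A ws h) = 0" .
qed

lemma H_i_eqI:
  assumes x: "x \<in> H_i A ws" and y: "y \<in> H_i A ws"
    and agree: "\<forall>k\<in>{1..length ws}. \<not> has_plus ws k \<longrightarrow> x k = y k"
  shows "x = y"
proof
  fix k
  show "x k = y k"
  proof (induction "length ws - k" arbitrary: k rule: less_induct)
    case less
    show ?case
    proof (cases "k \<in> {1..length ws} \<and> has_plus ws k")
      case True
      define p where "p = kplus ws k"
      have p: "k < p" "p \<le> length ws"
        using kplus_props[of ws k] True by (simp_all add: p_def)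
      have later: "x j = y j" if "k < j" "j \<le> p" for j
        using less that p by simp
      have "beta A ws k x = 0" "beta A ws k y = 0"
        using x y True unfolding H_i_def by auto
      moreover have "(\<Sum>j\<in>{k<..<p}. A (wi ws k) (wi ws j) * x j) =
                     (\<Sum>j\<in>{k<..<p}. A (wi ws k) (wi ws j) * y j)"
        using later by (intro sum.cong) auto
      ultimately show ?thesis
        using later[of p] p unfolding beta_def p_def[symmetric] by linarith
    next
      case False
      then show ?thesis
        using x y agree unfolding H_i_def by auto
    qed
  qed
qed

lemma root_pairing_interpolates_last_occurrences:
  assumes ws: "set ws \<subseteq> {1..n}" and m: "m \<le> length ws"
  shows "\<exists>h. \<forall>k. m < k \<and> k \<le> length ws \<and> \<not> has_plus ws k \<longrightarrow>
           (\<Sum>i\<in>{1..n}. mcoef n A ws k i * h i) = g k"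
  using m
proof (induction rule: inc_induct)
  case base
  then show ?case by auto
next
  case (step m)
  then obtain h where h: "\<forall>k. Suc m < k \<and> k \<le> length ws \<and> \<not> has_plus ws k \<longrightarrow>
           (\<Sum>i\<in>{1..n}. mcoef n A ws k i * h i) = g k" by blast
  show ?case
  proof (cases "has_plus ws (Suc m)")
    case True
    then show ?thesis
      using h by (metis Suc_lessI)
  next
    case last: False
    define c where "c = wi ws (Suc m)"
    have c_in: "c \<in> {1..n}"
      using wi_in_alphabet[OF ws, of "Suc m"] step.hyps by (simp add: c_def)
    have c_notin: "c \<notin> set (drop (Suc m) ws)"
      using last_occurrence_notin_suffix[of "Suc m" ws] last by (simp add: c_def)
    have c_later: "mcoef n A ws k c = 0" if "Suc m < k" "k \<le> length ws" for k
    proof -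
      have "wi ws k \<noteq> c"
        using last that unfolding has_plus_def c_def by auto
      moreover have "c \<notin> set (drop k ws)"
        using c_notin set_drop_subset_set_drop[of "Suc m" k ws] that by auto
      ultimately show ?thesis
        by (simp add: mcoef_off_suffix unit_vec_def)
    qed
    define t where "t = g (Suc m) - (\<Sum>i\<in>{1..n}. mcoef n A ws (Suc m) i * h i)"
    have "(\<Sum>i\<in>{1..n}. mcoef n A ws k i * unit_vec c i) = mcoef n A ws k c" for k
      using c_in by (simp add: unit_vec_def if_distrib sum.delta cong: if_cong)
    moreover have "(\<Sum>i\<in>{1..n}. mcoef n A ws k i * (h i + t * unit_vec c i)) =
        (\<Sum>i\<in>{1..n}. mcoef n A ws k i * h i) + t * (\<Sum>i\<in>{1..n}. mcoef n A ws k i * unit_vec c i)" for k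
      by (simp add: algebra_simps sum.distrib sum_distrib_left)
    ultimately have shift: "(\<Sum>i\<in>{1..n}. mcoef n A ws k i * (h i + t * unit_vec c i)) =
        (\<Sum>i\<in>{1..n}. mcoef n A ws k i * h i) + t * mcoef n A ws k c" for k
      by simp
    have c_here: "mcoef n A ws (Suc m) c = 1"
      using c_notin by (simp add: mcoef_off_suffix unit_vec_def c_def)
    show ?thesis
    proof (intro exI[of _ "\<lambda>i. h i + t * unit_vec c i"] allI impI)
      fix k assume k: "m < k \<and> k \<le> length ws \<and> \<not> has_plus ws k"
      show "(\<Sum>i\<in>{1..n}. mcoef n A ws k i * (h i + t * unit_vec c i)) = g k"
      proof (cases "k = Suc m")
        case True
        then show ?thesis using shift c_here by (simp add: t_def)
      next
        case False
        then have "Suc m < k" using k by simp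
        then show ?thesis using shift c_later h k by simp
      qed
    qed
  qed
qed

lemma H_i_eq_range_root_pairing:
  assumes ws: "set ws \<subseteq> {1..n}" and diag: "\<forall>i\<in>{1..n}. A i i = 2"
  shows "H_i A ws = range (root_pairing n A ws)"
proof (intro equalityI subsetI)
  fix x assume x: "x \<in> H_i A ws"
  obtain h where h: "\<forall>k. 0 < k \<and> k \<le> length ws \<and> \<not> has_plus ws k \<longrightarrow>
           (\<Sum>i\<in>{1..n}. mcoef n A ws k i * h i) = x k"
    using root_pairing_interpolates_last_occurrences[OF ws, of 0 A x] by auto
  have "x = root_pairing n A ws h"
    using h by (intro H_i_eqI[OF x root_pairing_in_H_i[of ws n A, OF ws diag]]) (auto simp: root_pairing_def)
  then show "x \<in> range (root_pairing n A ws)" by blast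
qed (use root_pairing_in_H_i[of ws n A, OF ws diag] in auto)

theorem lemma8p1:
  fixes n :: nat and A :: "nat \<Rightarrow> nat \<Rightarrow> int" and ws :: "nat list"
  assumes "is_simple_cartan n A"
    and "reduced_word_w0 n A ws"
  shows "H_i A ws =
    {(\<lambda>k. if k \<in> {1..length ws} then (\<Sum>i\<in>{1..n}. mcoef n A ws k i * h i) else 0) | h :: nat \<Rightarrow> int. True}"
proof -
  have "set ws \<subseteq> {1..n}"
    using assms(2) by (simp add: reduced_word_w0_def reduced_word_def)
  moreover have "\<forall>i\<in>{1..n}. A i i = 2"
    using assms(1) by (simp add: is_simple_cartan_def)
  ultimately show ?thesis
    by (simp add: H_i_eq_range_root_pairing root_pairing_def full_SetCompr_eq)
qed

end
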